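(* Every $E$-sequence is isomorphic to the evolutionary sequence of some phylogenetic quiver.
   Context: A quiver consists of a class of vertices and, for each ordered pair of vertices $(A,B)$, a set of edges $A\to B$ (loops and multiple edges allowed). An evolution of length $m\ge 0$ is a sequence $A_0\leftarrow A_1\leftarrow\cdots\leftarrow A_m$ of vertices together with edges $A_k\to A_{k-1}$ ($1\le k\le m$); $A_0$ is its initial and $A_m$ its terminal vertex. Write $A\le B$ ($A$ is an ancestor of $B$) if there is an evolution with initial vertex $A$ and terminal vertex $B$; $A,B$ are isotypic ($A\sim B$) if $A\le B$ and $B\le A$. A vertex $A$ is primitive if every ancestor of $A$ is isotypic to $A$. A full evolution for $X$ is an evolution with primitive initial vertex and terminal vertex $X$. The height $h(X)$ is the smallest length of a full evolution for $X$ ($\infty$ if none). An evolution $\alpha=(A_0\leftarrow\cdots\leftarrow A_m)$ embeds in $\beta=(B_0\leftarrow\cdots\leftarrow B_n)$ if $m\le n$ and there are $0\le r_0<\cdots<r_m\le n$ with $A_k\sim B_{r_k}$. A universal evolution for $X$ is a full evolution for $X$ embedding in every full evolution for $X$; $X$ is phylogenetic if one exists. A quiver is monotonous if $h(A)\ge h(B)$ for every edge $A\to B$; small if its isotypy classes form a set; phylogenetic if small, monotonous, and all vertices phylogenetic. Evolutionary sequence of a phylogenetic quiver $\mathcal O$: let $\mathcal O_m$ be the set of isotypy classes $[A]$ of vertices of height $m$, partially ordered by $[A]\le[B]$ iff $A\le B$; for $m\ge1$ the parental map $p:\mathcal O_m\to\mathcal O_{m-1}$ is $p([A])=[A_{m-1}]$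 where $A_0\leftarrow\cdots\leftarrow A_{m-1}\leftarrow A_m=A$ is any universal evolution for $A$ (this is well defined). The evolutionary sequence is the family of posets $(\mathcal O_m,\le)_{m\ge0}$ with the maps $p$. An $E$-sequence consists of partially ordered sets $(P_m,\le)_{m\ge0}$ and maps $p=p_m:P_m\to P_{m-1}$ ($m\ge1$) such that the partial order on $P_0$ is trivial (equality) and for all $m\ge1$ and $a,b\in P_m$, $a\le b$ implies $p(a)=p(b)$. Two $E$-sequences $P,P'$ are isomorphic if there are bijections $f_m:P_m\to P'_m$ ($m\ge0$) with $p'f_m=f_{m-1}p$ for $m\ge1$ and $a\le b\iff f_m(a)\le f_m(b)$ for all $a,b\in P_m$. *)

theory Defs
  imports Main "HOL-Library.Extended_Nat"
begin

record ('v, 'e) quiver =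
  verts :: "'v set"
  edges :: "'v \<Rightarrow> 'v \<Rightarrow> 'e set"

definition wf_quiver :: "('v, 'e) quiver \<Rightarrow> bool" where
  "wf_quiver Q \<longleftrightarrow> (\<forall>A B. edges Q A B \<noteq> {} \<longrightarrow> A \<in> verts Q \<and> B \<in> verts Q)"

text \<open>An evolution A_0 <- A_1 <- ... <- A_m is a pair (As, es) with As = [A_0,...,A_m]
  and es = [e_1,...,e_m], e_k an edge A_k -> A_(k-1) (stored at index k-1).\<close>
type_synonym ('v, 'e) evolution = "'v list \<times> 'e list"

definition evolution :: "('v, 'e) quiver \<Rightarrow> ('v, 'e) evolution \<Rightarrow> bool" where
  "evolution Q ev \<longleftrightarrow>
     fst ev \<noteq> [] \<and> length (snd ev) = length (fst ev) - 1 \<and>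
     set (fst ev) \<subseteq> verts Q \<and>
     (\<forall>k. 1 \<le> k \<and> k < length (fst ev) \<longrightarrow>
          snd ev ! (k - 1) \<in> edges Q (fst ev ! k) (fst ev ! (k - 1)))"

definition evo_length :: "('v, 'e) evolution \<Rightarrow> nat" where
  "evo_length ev = length (fst ev) - 1"

definition initial :: "('v, 'e) evolution \<Rightarrow> 'v" where
  "initial ev = hd (fst ev)"

definition terminal :: "('v, 'e) evolution \<Rightarrow> 'v" where
  "terminal ev = last (fst ev)"

definition ancestor :: "('v, 'e) quiver \<Rightarrow> 'v \<Rightarrow> 'v \<Rightarrow> bool" where
  "ancestor Q A B \<longleftrightarrow> (\<exists>ev. evolution Q ev \<and> initial ev = A \<and> terminal ev = B)"

definition isotypic :: "('v, 'e) quiver \<Rightarrow> 'v \<Rightarrow> 'v \<Rightarrow> bool" where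
  "isotypic Q A B \<longleftrightarrow> ancestor Q A B \<and> ancestor Q B A"

definition primitive :: "('v, 'e) quiver \<Rightarrow> 'v \<Rightarrow> bool" where
  "primitive Q A \<longleftrightarrow> A \<in> verts Q \<and> (\<forall>B. ancestor Q B A \<longrightarrow> isotypic Q B A)"

definition full_evolution :: "('v, 'e) quiver \<Rightarrow> ('v, 'e) evolution \<Rightarrow> 'v \<Rightarrow> bool" where
  "full_evolution Q ev X \<longleftrightarrow> evolution Q ev \<and> primitive Q (initial ev) \<and> terminal ev = X"

text \<open>Height: smallest length of a full evolution (infinity if none).\<close>
definition height :: "('v, 'e) quiver \<Rightarrow> 'v \<Rightarrow> enat" where
  "height Q X = (INF ev \<in> {ev. full_evolution Q ev X}. enat (evo_length ev))"

definition embeds :: "('v, 'e) quiver \<Rightarrow> ('v, 'e) evolution \<Rightarrow> ('v, 'e) evolution \<Rightarrow> bool" where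
  "embeds Q \<alpha> \<beta> \<longleftrightarrow> evo_length \<alpha> \<le> evo_length \<beta> \<and>
     (\<exists>r :: nat \<Rightarrow> nat. strict_mono_on {0..evo_length \<alpha>} r \<and>
        r (evo_length \<alpha>) \<le> evo_length \<beta> \<and>
        (\<forall>k \<le> evo_length \<alpha>. isotypic Q (fst \<alpha> ! k) (fst \<beta> ! r k)))"

definition universal_evolution :: "('v, 'e) quiver \<Rightarrow> ('v, 'e) evolution \<Rightarrow> 'v \<Rightarrow> bool" where
  "universal_evolution Q \<alpha> X \<longleftrightarrow> full_evolution Q \<alpha> X \<and>
     (\<forall>\<beta>. full_evolution Q \<beta> X \<longrightarrow> embeds Q \<alpha> \<beta>)"

definition phylogenetic_vertex :: "('v, 'e) quiver \<Rightarrow> 'v \<Rightarrow> bool" where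
  "phylogenetic_vertex Q X \<longleftrightarrow> (\<exists>\<alpha>. universal_evolution Q \<alpha> X)"

definition monotonous :: "('v, 'e) quiver \<Rightarrow> bool" where
  "monotonous Q \<longleftrightarrow> (\<forall>A B. edges Q A B \<noteq> {} \<longrightarrow> height Q A \<ge> height Q B)"

text \<open>Smallness is automatic in HOL (vertices form a set), so it is not stated.\<close>
definition phylogenetic_quiver :: "('v, 'e) quiver \<Rightarrow> bool" where
  "phylogenetic_quiver Q \<longleftrightarrow> wf_quiver Q \<and> monotonous Q \<and>
     (\<forall>X \<in> verts Q. phylogenetic_vertex Q X)"

definition iso_class :: "('v, 'e) quiver \<Rightarrow> 'v \<Rightarrow> 'v set" where
  "iso_class Q A = {B \<in> verts Q. isotypic Q A B}"

definition evo_level :: "('v, 'e) quiver \<Rightarrow> nat \<Rightarrow> 'v set set" where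
  "evo_level Q m = {iso_class Q A | A. A \<in> verts Q \<and> height Q A = enat m}"

definition evo_le :: "('v, 'e) quiver \<Rightarrow> nat \<Rightarrow> 'v set \<Rightarrow> 'v set \<Rightarrow> bool" where
  "evo_le Q m C D \<longleftrightarrow> (\<exists>A \<in> C. \<exists>B \<in> D. ancestor Q A B)"

text \<open>Parental map O_m -> O_(m-1): [A] maps to [A_(m-1)] for a universal evolution
  A_0 <- ... <- A_(m-1) <- A_m = A (well defined by the paper).\<close>
definition evo_parent :: "('v, 'e) quiver \<Rightarrow> nat \<Rightarrow> 'v set \<Rightarrow> 'v set" where
  "evo_parent Q m C = (SOME D. \<exists>A \<in> C. \<exists>\<alpha>. universal_evolution Q \<alpha> A \<and>
                                   D = iso_class Q (fst \<alpha> ! (m - 1)))"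

definition E_sequence :: "(nat \<Rightarrow> 'a set) \<Rightarrow> (nat \<Rightarrow> 'a \<Rightarrow> 'a \<Rightarrow> bool) \<Rightarrow> (nat \<Rightarrow> 'a \<Rightarrow> 'a) \<Rightarrow> bool" where
  "E_sequence P le p \<longleftrightarrow>
     (\<forall>m. (\<forall>a \<in> P m. le m a a) \<and>
          (\<forall>a \<in> P m. \<forall>b \<in> P m. le m a b \<and> le m b a \<longrightarrow> a = b) \<and>
          (\<forall>a \<in> P m. \<forall>b \<in> P m. \<forall>c \<in> P m. le m a b \<and> le m b c \<longrightarrow> le m a c)) \<and>
     (\<forall>a \<in> P 0. \<forall>b \<in> P 0. le 0 a b \<longleftrightarrow> a = b) \<and>
     (\<forall>m \<ge> 1. \<forall>a \<in> P m. p m a \<in> P (m - 1)) \<and>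
     (\<forall>m \<ge> 1. \<forall>a \<in> P m. \<forall>b \<in> P m. le m a b \<longrightarrow> p m a = p m b)"

definition E_iso ::
  "(nat \<Rightarrow> 'a set) \<Rightarrow> (nat \<Rightarrow> 'a \<Rightarrow> 'a \<Rightarrow> bool) \<Rightarrow> (nat \<Rightarrow> 'a \<Rightarrow> 'a) \<Rightarrow>
   (nat \<Rightarrow> 'b set) \<Rightarrow> (nat \<Rightarrow> 'b \<Rightarrow> 'b \<Rightarrow> bool) \<Rightarrow> (nat \<Rightarrow> 'b \<Rightarrow> 'b) \<Rightarrow> bool" where
  "E_iso P le p P' le' p' \<longleftrightarrow>
     (\<exists>f :: nat \<Rightarrow> 'a \<Rightarrow> 'b.
        (\<forall>m. bij_betw (f m) (P m) (P' m)) \<and>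
        (\<forall>m \<ge> 1. \<forall>a \<in> P m. p' m (f m a) = f (m - 1) (p m a)) \<and>
        (\<forall>m. \<forall>a \<in> P m. \<forall>b \<in> P m. le m a b \<longleftrightarrow> le' m (f m a) (f m b)))"

end

theory Submission
  imports Defs
begin

text \<open>Realise the E-sequence as the quiver on the pairs (m, a) with a \<in> P m, with an edge from each
  vertex to every smaller element of its level and to its parent. Every ancestor A of a vertex B lies
  at a level j \<le> level B and below the (level B - j)-fold parent of B; this relation is a partial
  order, so isotypy classes are singletons, the primitive vertices are those of level 0, and the
  height of a vertex is its level. The chain of parents of a vertex is a universal evolution for it:
  a full evolution must climb through every level, and where it enters level k + 1 it uses a parent
  edge out of a vertex below the lineage element of level k + 1, so by the E-sequence axiom the target
  is the lineage element of level k. Reading off levels, order and parents gives back the E-sequence.\<close>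

primrec iter_parent :: "(nat \<Rightarrow> 'a \<Rightarrow> 'a) \<Rightarrow> nat \<Rightarrow> nat \<Rightarrow> 'a \<Rightarrow> 'a" where
  "iter_parent p 0 m b = b"
| "iter_parent p (Suc k) m b = p (m - k) (iter_parent p k m b)"

lemma iter_parent_add: "iter_parent p (k + l) m b = iter_parent p l (m - k) (iter_parent p k m b)"
  by (induction l) (auto simp: diff_diff_add)

lemma nat_step_crossing:
  fixes f :: "nat \<Rightarrow> nat"
  assumes "\<forall>i<n. f (Suc i) \<le> Suc (f i)" "f 0 \<le> k" "k < f n"
  shows "\<exists>i<n. f i = k \<and> f (Suc i) = Suc k"
  using assms
proof (induction n)
  case (Suc n)
  show ?case
  proof (cases "k < f n")
    case True
    with Suc show ?thesis by (metis less_SucI)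
  next
    case False
    with Suc.prems show ?thesis by (intro exI[of _ n]) auto
  qed
qed simp

lemma strict_mono_on_add_le:
  fixes r :: "nat \<Rightarrow> nat"
  assumes "strict_mono_on {0..m} r" "k + d \<le> m"
  shows "r k + d \<le> r (k + d)"
  using assms(2)
proof (induction d)
  case (Suc d)
  then have "r (k + d) < r (k + Suc d)"
    by (intro strict_mono_onD[OF assms(1)]) auto
  with Suc show ?case by simp
qed simp

lemma strict_mono_on_bounded_imp_id:
  fixes r :: "nat \<Rightarrow> nat"
  assumes "strict_mono_on {0..m} r" "r m \<le> m" "k \<le> m"
  shows "r k = k"
  using strict_mono_on_add_le[OF assms(1), of 0 k] strict_mono_on_add_le[OF assms(1), of k "m - k"] assms
  by simp

text \<open>Every edge set is empty or UNIV, so edge labels carry no information.\<close>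
definition E_quiver ::
  "(nat \<Rightarrow> 'a set) \<Rightarrow> (nat \<Rightarrow> 'a \<Rightarrow> 'a \<Rightarrow> bool) \<Rightarrow> (nat \<Rightarrow> 'a \<Rightarrow> 'a) \<Rightarrow> (nat \<times> 'a, 'e) quiver" where
  "E_quiver P le p = \<lparr>verts = {A. snd A \<in> P (fst A)},
     edges = (\<lambda>X Y. if snd X \<in> P (fst X) \<and> snd Y \<in> P (fst Y) \<and>
        ((fst X = fst Y \<and> le (fst X) (snd Y) (snd X)) \<or> (fst X = Suc (fst Y) \<and> snd Y = p (fst X) (snd X)))
        then UNIV else {})\<rparr>"

definition lineage_le :: "(nat \<Rightarrow> 'a \<Rightarrow> 'a \<Rightarrow> bool) \<Rightarrow> (nat \<Rightarrow> 'a \<Rightarrow> 'a) \<Rightarrow> nat \<times> 'a \<Rightarrow> nat \<times> 'a \<Rightarrow> bool" where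
  "lineage_le le p A B \<longleftrightarrow>
     fst A \<le> fst B \<and> le (fst A) (snd A) (iter_parent p (fst B - fst A) (fst B) (snd B))"

definition lineage :: "(nat \<Rightarrow> 'a \<Rightarrow> 'a) \<Rightarrow> nat \<Rightarrow> 'a \<Rightarrow> (nat \<times> 'a, 'e) evolution" where
  "lineage p m b = (map (\<lambda>k. (k, iter_parent p (m - k) m b)) [0..<Suc m], replicate m undefined)"

lemma verts_E_quiver [simp]: "verts (E_quiver P le p) = {A. snd A \<in> P (fst A)}"
  by (simp add: E_quiver_def)

lemma edges_E_quiver_nonempty_iff:
  "edges (E_quiver P le p) X Y \<noteq> {} \<longleftrightarrow> snd X \<in> P (fst X) \<and> snd Y \<in> P (fst Y) \<and>
     ((fst X = fst Y \<and> le (fst X) (snd Y) (snd X)) \<or> (fst X = Suc (fst Y) \<and> snd Y = p (fst X) (snd X)))"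
  by (simp add: E_quiver_def)

lemma lineage_nth: "k \<le> m \<Longrightarrow> fst (lineage p m b) ! k = (k, iter_parent p (m - k) m b)"
  unfolding lineage_def by (simp del: upt_Suc)

lemma length_lineage: "length (fst (lineage p m b)) = Suc m"
  and evo_length_lineage: "evo_length (lineage p m b) = m"
  unfolding lineage_def evo_length_def by simp_all

lemma initial_lineage: "initial (lineage p m b) = (0, iter_parent p m m b)"
  unfolding initial_def lineage_def by (simp del: upt_Suc add: upt_rec)

lemma terminal_lineage: "terminal (lineage p m b) = (m, b)"
  unfolding terminal_def lineage_def by simp

lemma evolution_nth_edge:
  assumes "evolution Q ev" "Suc i < length (fst ev)"
  shows "edges Q (fst ev ! Suc i) (fst ev ! i) \<noteq> {}"
proof -
  have "snd ev ! (Suc i - 1) \<in> edges Q (fst ev ! Suc i) (fst ev ! (Suc i - 1))"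
    using assms unfolding evolution_def by (metis One_nat_def Suc_le_mono zero_le)
  then show ?thesis by auto
qed

lemma evolution_nth_vert:
  assumes "evolution Q ev" "i < length (fst ev)"
  shows "fst ev ! i \<in> verts Q"
  using assms unfolding evolution_def by (meson nth_mem subsetD)

lemma full_evolution_nth:
  assumes "full_evolution Q \<beta> X"
  shows "length (fst \<beta>) = Suc (evo_length \<beta>)" "primitive Q (fst \<beta> ! 0)" "fst \<beta> ! evo_length \<beta> = X"
proof -
  have "fst \<beta> \<noteq> []" using assms unfolding full_evolution_def evolution_def by simp
  then show "length (fst \<beta>) = Suc (evo_length \<beta>)" "primitive Q (fst \<beta> ! 0)" "fst \<beta> ! evo_length \<beta> = X"
    using assms unfolding full_evolution_def initial_def terminal_def evo_length_def
    by (simp_all add: hd_conv_nth last_conv_nth)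
qed

lemma embeds_shorter_nth:
  assumes "embeds Q \<alpha> \<beta>" "evo_length \<beta> \<le> evo_length \<alpha>" "k \<le> evo_length \<alpha>"
  shows "isotypic Q (fst \<alpha> ! k) (fst \<beta> ! k)"
proof -
  obtain r where r: "strict_mono_on {0..evo_length \<alpha>} r" "r (evo_length \<alpha>) \<le> evo_length \<alpha>"
    "\<forall>k \<le> evo_length \<alpha>. isotypic Q (fst \<alpha> ! k) (fst \<beta> ! r k)"
    using assms(1,2) unfolding embeds_def by auto
  then show ?thesis using strict_mono_on_bounded_imp_id[OF r(1,2) assms(3)] assms(3) by metis
qed

lemma ancestor_if_edge:
  assumes "e \<in> edges Q X Y" "X \<in> verts Q" "Y \<in> verts Q"
  shows "ancestor Q Y X"
proof -
  have "evolution Q ([Y, X], [e])"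
    using assms unfolding evolution_def by (auto simp: less_Suc_eq)
  then show ?thesis unfolding ancestor_def initial_def terminal_def by force
qed

locale E_seq =
  fixes P :: "nat \<Rightarrow> 'a set" and le :: "nat \<Rightarrow> 'a \<Rightarrow> 'a \<Rightarrow> bool" and p :: "nat \<Rightarrow> 'a \<Rightarrow> 'a"
  assumes E_sequence: "E_sequence P le p"
begin

lemma le_refl: "a \<in> P m \<Longrightarrow> le m a a"
  and le_antisym: "a \<in> P m \<Longrightarrow> b \<in> P m \<Longrightarrow> le m a b \<Longrightarrow> le m b a \<Longrightarrow> a = b"
  and le_trans: "a \<in> P m \<Longrightarrow> b \<in> P m \<Longrightarrow> c \<in> P m \<Longrightarrow> le m a b \<Longrightarrow> le m b c \<Longrightarrow> le m a c"
  using E_sequence[unfolded E_sequence_def, THEN conjunct1] by blast+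

lemma le_level_0: "a \<in> P 0 \<Longrightarrow> b \<in> P 0 \<Longrightarrow> le 0 a b \<Longrightarrow> a = b"
  using E_sequence[unfolded E_sequence_def, THEN conjunct2, THEN conjunct1] by blast

lemma parent_in: "1 \<le> m \<Longrightarrow> a \<in> P m \<Longrightarrow> p m a \<in> P (m - 1)"
  and parent_le_eq: "1 \<le> m \<Longrightarrow> a \<in> P m \<Longrightarrow> b \<in> P m \<Longrightarrow> le m a b \<Longrightarrow> p m a = p m b"
  using E_sequence[unfolded E_sequence_def, THEN conjunct2, THEN conjunct2] by blast+

abbreviation Q :: "(nat \<times> 'a, 'e) quiver" where "Q \<equiv> E_quiver P le p"

lemma iter_parent_in: "b \<in> P m \<Longrightarrow> k \<le> m \<Longrightarrow> iter_parent p k m b \<in> P (m - k)"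
proof (induction k)
  case (Suc k)
  then have "1 \<le> m - k" "m - k - 1 = m - Suc k" by simp_all
  with Suc parent_in[of "m - k"] show ?case by simp
qed simp

lemma iter_parent_level_in: "b \<in> P m \<Longrightarrow> k \<le> m \<Longrightarrow> iter_parent p (m - k) m b \<in> P k"
  using iter_parent_in[of b m "m - k"] by simp

lemma iter_parent_le_eq:
  assumes "le m b c" "b \<in> P m" "c \<in> P m" "1 \<le> k"
  shows "iter_parent p k m b = iter_parent p k m c"
proof -
  obtain l where k: "k = 1 + l" using assms(4) by (metis le_Suc_ex)
  have "p m b = p m c"
    using assms le_level_0[of b c] parent_le_eq[of m b c] by (cases "m = 0") auto
  then show ?thesis unfolding k iter_parent_add by simp
qed

lemma lineage_le_refl: "snd A \<in> P (fst A) \<Longrightarrow> lineage_le le p A A"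
  unfolding lineage_le_def by (simp add: le_refl)

lemma lineage_le_trans:
  assumes "snd A \<in> P (fst A)" "snd B \<in> P (fst B)" "snd C \<in> P (fst C)"
    and AB: "lineage_le le p A B" and BC: "lineage_le le p B C"
  shows "lineage_le le p A C"
proof -
  obtain j a j' b m c where vs: "A = (j, a)" "B = (j', b)" "C = (m, c)" by (metis prod.exhaust)
  have lvl: "j \<le> j'" "j' \<le> m" and ab: "le j a (iter_parent p (j' - j) j' b)"
    and bc: "le j' b (iter_parent p (m - j') m c)"
    using AB BC unfolding lineage_le_def vs by auto
  have mem: "a \<in> P j" "b \<in> P j'" "c \<in> P m" "iter_parent p (m - j') m c \<in> P j'"
    using assms(1-3) iter_parent_in[of c m "m - j'"] lvl unfolding vs by auto
  show ?thesis
  proof (cases "j = j'")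
    case True
    then show ?thesis using ab bc le_trans[of a j b] mem lvl unfolding lineage_le_def vs by simp
  next
    case False
    have "iter_parent p (j' - j) j' b = iter_parent p (j' - j) j' (iter_parent p (m - j') m c)"
      using iter_parent_le_eq[OF bc mem(2,4)] lvl False by simp
    also have "\<dots> = iter_parent p (m - j) m c"
      using iter_parent_add[of p "m - j'" "j' - j" m c] lvl by simp
    finally show ?thesis using ab lvl unfolding lineage_le_def vs by simp
  qed
qed

lemma edge_lineage_le:
  assumes "edges Q X Y \<noteq> {}"
  shows "lineage_le le p Y X" "fst X \<le> Suc (fst Y)"
  using assms le_refl unfolding edges_E_quiver_nonempty_iff lineage_le_def by auto

lemma evolution_lineage_le:
  assumes ev: "evolution Q ev" and "i \<le> j" "j < length (fst ev)"
  shows "lineage_le le p (fst ev ! i) (fst ev ! j)"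
  using assms(2,3)
proof (induction j rule: dec_induct)
  case base
  then show ?case using lineage_le_refl evolution_nth_vert[OF ev] by simp
next
  case (step j)
  have "lineage_le le p (fst ev ! j) (fst ev ! Suc j)"
    using edge_lineage_le(1)[OF evolution_nth_edge[OF ev]] step.prems by blast
  moreover have "i < length (fst ev)" "j < length (fst ev)" using step by simp_all
  ultimately show ?case
    using lineage_le_trans[of "fst ev ! i" "fst ev ! j" "fst ev ! Suc j"] step
      evolution_nth_vert[OF ev] by simp
qed

lemma evolution_level_mono:
  "evolution Q ev \<Longrightarrow> i \<le> j \<Longrightarrow> j < length (fst ev) \<Longrightarrow> fst (fst ev ! i) \<le> fst (fst ev ! j)"
  using evolution_lineage_le unfolding lineage_le_def by blast

lemma evolution_level_bound:
  assumes ev: "evolution Q ev" and "i < length (fst ev)"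
  shows "fst (fst ev ! i) \<le> fst (fst ev ! 0) + i"
  using assms(2)
  by (induction i) (auto dest: edge_lineage_le(2)[OF evolution_nth_edge[OF ev]])

lemma ancestor_imp_lineage_le:
  assumes "ancestor (Q :: (nat \<times> 'a, 'e) quiver) A B"
  shows "lineage_le le p A B" "snd A \<in> P (fst A)" "snd B \<in> P (fst B)"
proof -
  obtain ev :: "(nat \<times> 'a, 'e) evolution" where ev: "evolution Q ev" "initial ev = A" "terminal ev = B"
    using assms unfolding ancestor_def by blast
  have "fst ev \<noteq> []" using ev(1) unfolding evolution_def by simp
  then have ends: "A = fst ev ! 0" "B = fst ev ! (length (fst ev) - 1)" "0 < length (fst ev)"
    using ev(2,3) unfolding initial_def terminal_def by (simp_all add: hd_conv_nth last_conv_nth)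
  then show "lineage_le le p A B" "snd A \<in> P (fst A)" "snd B \<in> P (fst B)"
    using evolution_lineage_le[OF ev(1), of 0] evolution_nth_vert[OF ev(1)] by simp_all
qed

lemma ancestor_level_le: "a \<in> P m \<Longrightarrow> b \<in> P m \<Longrightarrow> le m a b \<Longrightarrow> ancestor Q (m, a) (m, b)"
  by (rule ancestor_if_edge[of undefined]) (simp_all add: E_quiver_def)

lemma ancestor_parent: "1 \<le> m \<Longrightarrow> a \<in> P m \<Longrightarrow> ancestor Q (m - 1, p m a) (m, a)"
  using parent_in[of m a] by (intro ancestor_if_edge[of undefined]) (simp_all add: E_quiver_def)

lemma ancestor_refl: "snd A \<in> P (fst A) \<Longrightarrow> ancestor Q A A"
  unfolding ancestor_def
  by (rule exI[of _ "([A], [])"]) (simp add: evolution_def initial_def terminal_def)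

lemma isotypic_iff: "isotypic Q A B \<longleftrightarrow> A = B \<and> snd A \<in> P (fst A)"
proof
  assume iso: "isotypic Q A B"
  then have "lineage_le le p A B" "lineage_le le p B A" "snd A \<in> P (fst A)" "snd B \<in> P (fst B)"
    using ancestor_imp_lineage_le unfolding isotypic_def by blast+
  then show "A = B \<and> snd A \<in> P (fst A)"
    using le_antisym[of "snd A" "fst A" "snd B"] unfolding lineage_le_def by (auto simp: prod_eq_iff)
qed (auto simp: isotypic_def ancestor_refl)

lemma iso_class_E_quiver: "snd A \<in> P (fst A) \<Longrightarrow> iso_class Q A = {A}"
  unfolding iso_class_def isotypic_iff by auto

lemma ancestor_level_0:
  assumes "ancestor Q B A" "fst A = 0"
  shows "B = A"
  using ancestor_imp_lineage_le[OF assms(1)] assms(2) le_level_0[of "snd B" "snd A"]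
  unfolding lineage_le_def by (auto simp: prod_eq_iff)

lemma primitive_iff: "primitive Q A \<longleftrightarrow> snd A \<in> P (fst A) \<and> fst A = 0"
proof
  assume prim: "primitive Q A"
  then have A: "snd A \<in> P (fst A)" unfolding primitive_def by simp
  show "snd A \<in> P (fst A) \<and> fst A = 0"
  proof (rule ccontr)
    assume "\<not> ?thesis"
    with A have m: "1 \<le> fst A" by simp
    then show False
      using prim ancestor_parent[OF m A] m unfolding primitive_def isotypic_iff prod.collapse
      by (metis diff_less fst_conv less_irrefl zero_less_one less_le_trans)
  qed
next
  assume "snd A \<in> P (fst A) \<and> fst A = 0"
  then show "primitive Q A"
    using ancestor_level_0 ancestor_imp_lineage_le(2) unfolding primitive_def isotypic_iff by fastforce
qed

lemma evolution_lineage: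
  assumes b: "b \<in> P m"
  shows "evolution Q (lineage p m b)"
  unfolding evolution_def
proof (intro conjI allI impI)
  show "set (fst (lineage p m b)) \<subseteq> verts Q"
    using b iter_parent_level_in[OF b] by (auto simp: lineage_def)
  fix k assume "1 \<le> k \<and> k < length (fst (lineage p m b))"
  then have k: "1 \<le> k" "k \<le> m" by (auto simp: length_lineage)
  have "m - (k - 1) = Suc (m - k)" using k by simp
  then show "snd (lineage p m b) ! (k - 1) \<in>
      edges Q (fst (lineage p m b) ! k) (fst (lineage p m b) ! (k - 1))"
    using k iter_parent_in[OF b, of "m - k"] iter_parent_in[OF b, of "m - (k - 1)"]
    by (simp add: lineage_nth E_quiver_def)
qed (simp_all add: lineage_def)

lemma full_evolution_lineage:
  assumes b: "b \<in> P m"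
  shows "full_evolution Q (lineage p m b) (m, b)"
  using evolution_lineage[OF b] iter_parent_in[OF b, of m]
  unfolding full_evolution_def primitive_iff initial_lineage terminal_lineage by simp

lemma full_evolution_level_0:
  assumes "full_evolution Q \<beta> X"
  shows "fst (fst \<beta> ! 0) = 0"
  using full_evolution_nth(2)[OF assms] unfolding primitive_iff by simp

lemma full_evolution_length_ge_level:
  assumes "full_evolution Q \<beta> X"
  shows "fst X \<le> evo_length \<beta>"
  using evolution_level_bound[of \<beta> "evo_length \<beta>"] assms full_evolution_level_0[OF assms]
    full_evolution_nth[OF assms]
  unfolding full_evolution_def by simp

lemma height_E_quiver:
  assumes "snd X \<in> P (fst X)"
  shows "height Q X = enat (fst X)"
  unfolding height_def
proof (rule antisym)
  show "(INF ev \<in> {ev. full_evolution Q ev X}. enat (evo_length ev)) \<le> enat (fst X)"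
    using full_evolution_lineage[OF assms]
    by (intro INF_lower2[where i = "lineage p (fst X) (snd X)"]) (simp_all add: evo_length_lineage)
qed (auto intro!: INF_greatest dest: full_evolution_length_ge_level)

lemma full_evolution_meets_lineage:
  assumes b: "b \<in> P m" and \<beta>: "full_evolution Q \<beta> (m, b)" and k: "k \<le> m"
  obtains i where "i \<le> evo_length \<beta>" "fst \<beta> ! i = (k, iter_parent p (m - k) m b)"
proof (cases "k = m")
  case True
  then show ?thesis using that[OF order_refl] full_evolution_nth(3)[OF \<beta>] by simp
next
  case False
  define n where "n = evo_length \<beta>"
  define lv where "lv i = fst (fst \<beta> ! i)" for i
  have ev: "evolution Q \<beta>" and len: "length (fst \<beta>) = Suc n" and last: "fst \<beta> ! n = (m, b)"
    using \<beta> full_evolution_nth[OF \<beta>] unfolding full_evolution_def n_def by auto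
  have "\<forall>i<n. lv (Suc i) \<le> Suc (lv i)"
    using edge_lineage_le(2)[OF evolution_nth_edge[OF ev]] len unfolding lv_def by simp
  then obtain i where i: "i < n" "lv i = k" "lv (Suc i) = Suc k"
    using nat_step_crossing[of n lv k] full_evolution_level_0[OF \<beta>] last False k
    unfolding lv_def by auto
  let ?X = "fst \<beta> ! Suc i" and ?Y = "fst \<beta> ! i"
  have X: "snd ?X \<in> P (Suc k)" and Y: "snd ?Y = p (Suc k) (snd ?X)"
    using evolution_nth_edge[OF ev, of i] i len
    unfolding edges_E_quiver_nonempty_iff lv_def by auto
  have "lineage_le le p ?X (fst \<beta> ! n)"
    using evolution_lineage_le[OF ev, of "Suc i" n] i len by simp
  then have "le (Suc k) (snd ?X) (iter_parent p (m - Suc k) m b)"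
    using i last unfolding lineage_le_def lv_def by (simp add: Suc_diff_le)
  then have "p (Suc k) (snd ?X) = p (Suc k) (iter_parent p (m - Suc k) m b)"
    using parent_le_eq X iter_parent_in[OF b, of "m - Suc k"] False k by simp
  also have "\<dots> = iter_parent p (Suc (m - Suc k)) m b"
    using False k by (simp only: iter_parent.simps diff_diff_cancel Suc_leI le_neq_implies_less)
  also have "Suc (m - Suc k) = m - k"
    using False k by simp
  finally show ?thesis
    using that[of i] i Y unfolding lv_def n_def by (simp add: prod_eq_iff)
qed

text \<open>The lineage of a vertex is visited, in order, by every full evolution of it; the levels
  of the visited vertices increase strictly, which gives the embedding.\<close>
lemma lineage_embeds:
  assumes b: "b \<in> P m" and \<beta>: "full_evolution Q \<beta> (m, b)"
  shows "embeds Q (lineage p m b) \<beta>"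
proof -
  have ev: "evolution Q \<beta>" and len: "length (fst \<beta>) = Suc (evo_length \<beta>)"
    using \<beta> full_evolution_nth(1)[OF \<beta>] unfolding full_evolution_def by auto
  have "\<exists>i. i \<le> evo_length \<beta> \<and> fst \<beta> ! i = (k, iter_parent p (m - k) m b)" if "k \<le> m" for k
    using full_evolution_meets_lineage[OF b \<beta> that] by blast
  then obtain r where r: "\<And>k. k \<le> m \<Longrightarrow> r k \<le> evo_length \<beta> \<and> fst \<beta> ! r k = (k, iter_parent p (m - k) m b)"
    by metis
  have "strict_mono_on {0..m} r"
  proof (rule strict_mono_onI)
    fix x y assume xy: "x \<in> {0..m}" "y \<in> {0..m}" "x < y"
    show "r x < r y"
    proof (rule ccontr)
      assume "\<not> r x < r y"
      then have "fst (fst \<beta> ! r y) \<le> fst (fst \<beta> ! r x)"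
        using evolution_level_mono[OF ev, of "r y" "r x"] r[of x] xy len by simp
      then show False using r xy by simp
    qed
  qed
  then show ?thesis
    using r full_evolution_length_ge_level[OF \<beta>] iter_parent_level_in[OF b]
    unfolding embeds_def evo_length_lineage isotypic_iff by (auto simp: lineage_nth)
qed

lemma universal_evolution_lineage: "b \<in> P m \<Longrightarrow> universal_evolution Q (lineage p m b) (m, b)"
  unfolding universal_evolution_def using full_evolution_lineage lineage_embeds by blast

lemma universal_evolution_nth:
  fixes \<alpha> :: "(nat \<times> 'a, 'e) evolution"
  assumes b: "b \<in> P m" and u: "universal_evolution Q \<alpha> (m, b)" and k: "k \<le> m"
  shows "fst \<alpha> ! k = (k, iter_parent p (m - k) m b)"
proof -
  have "m \<le> evo_length \<alpha>"
    using u full_evolution_length_ge_level unfolding universal_evolution_def by fastforce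
  moreover have "embeds Q \<alpha> (lineage p m b)"
    using u full_evolution_lineage[OF b] unfolding universal_evolution_def by blast
  ultimately show ?thesis
    using embeds_shorter_nth[of Q \<alpha> "lineage p m b" k] k
    unfolding isotypic_iff evo_length_lineage by (simp add: lineage_nth)
qed

lemma evo_level_E_quiver: "evo_level Q m = (\<lambda>a. {(m, a)}) ` P m"
  unfolding evo_level_def
  by (auto simp: iso_class_E_quiver height_E_quiver) (metis fst_conv snd_conv iso_class_E_quiver height_E_quiver)

lemma evo_parent_E_quiver:
  assumes m: "1 \<le> m" and a: "a \<in> P m"
  shows "evo_parent (Q :: (nat \<times> 'a, 'e) quiver) m {(m, a)} = {(m - 1, p m a)}"
proof -
  have "m - (m - 1) = Suc 0" using m by simp
  then have parent: "fst \<alpha> ! (m - 1) = (m - 1, p m a)"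
    if "universal_evolution Q \<alpha> (m, a)" for \<alpha> :: "(nat \<times> 'a, 'e) evolution"
    using universal_evolution_nth[OF a that, of "m - 1"] by simp
  show ?thesis
    unfolding evo_parent_def
    by (rule someI2_ex)
      (use universal_evolution_lineage[OF a] in blast,
       use parent iso_class_E_quiver[of "(m - 1, p m a)"] parent_in[OF m a] in force)
qed

lemma evo_le_E_quiver_iff:
  assumes "a \<in> P m" "b \<in> P m"
  shows "evo_le Q m {(m, a)} {(m, b)} \<longleftrightarrow> le m a b"
  using assms ancestor_level_le[of a m b] ancestor_imp_lineage_le(1)[of "(m, a)" "(m, b)"]
  unfolding evo_le_def lineage_le_def by auto

lemma phylogenetic_E_quiver: "phylogenetic_quiver Q"
  unfolding phylogenetic_quiver_def wf_quiver_def monotonous_def phylogenetic_vertex_def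
proof (intro conjI allI impI ballI)
  fix A B assume "edges Q A B \<noteq> {}"
  then show "A \<in> verts Q" "B \<in> verts Q" "height Q B \<le> height Q A"
    using edge_lineage_le(1) unfolding edges_E_quiver_nonempty_iff lineage_le_def
    by (auto simp: height_E_quiver)
next
  fix X assume "X \<in> verts Q"
  then show "\<exists>\<alpha>. universal_evolution Q \<alpha> X"
    using universal_evolution_lineage[of "snd X" "fst X"] by (metis mem_Collect_eq prod.collapse verts_E_quiver)
qed

lemma E_iso_E_quiver: "E_iso P le p (evo_level Q) (evo_le Q) (evo_parent Q)"
  unfolding E_iso_def
proof (intro exI[of _ "\<lambda>m a. {(m, a)}"] conjI allI impI ballI)
  fix m show "bij_betw (\<lambda>a. {(m, a)}) (P m) (evo_level Q m)"
    unfolding evo_level_E_quiver by (auto simp: bij_betw_def inj_on_def)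
qed (simp_all add: evo_parent_E_quiver evo_le_E_quiver_iff)

end

theorem theorem8p1:
  fixes P :: "nat \<Rightarrow> 'a set" and le :: "nat \<Rightarrow> 'a \<Rightarrow> 'a \<Rightarrow> bool" and p :: "nat \<Rightarrow> 'a \<Rightarrow> 'a"
  assumes "E_sequence P le p"
  shows "\<exists>Q :: (nat \<times> 'a, 'e) quiver.
           phylogenetic_quiver Q \<and>
           E_iso P le p (evo_level Q) (evo_le Q) (evo_parent Q)"
proof -
  interpret E_seq P le p by (rule E_seq.intro) fact
  show ?thesis using phylogenetic_E_quiver E_iso_E_quiver by blast
qed

end
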